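(* Under the setting described in the context, if $\mathbb P^x(\zeta<\infty)=1$ for every $x$, then $\bigcap_{g\in C_0^{0,1}(\mathbb R^d)}\Gamma_{out}[g]=\partial_0 O$.
   Context: Let $d\ge1$, $\mathbb D^d$ the space of càdlàg paths $[0,\infty)\to\mathbb R^d$, $X_t(\omega)=\omega(t)$. $\{P_t\}$ is a Feller semigroup on $C_0(\mathbb R^d)$ with generator whose domain contains $C_0^\infty(\mathbb R^d)$; $\mathbb P^x$ is the law on $\mathbb D^d$ of the càdlàg Feller process with this semigroup started at $x$, $\mathbb E^x$ its expectation (filtration: natural filtration augmented by all $\mathbb P^\nu$-null sets, intersected over initial laws $\nu$). $O\subset\mathbb R^d$ is a connected bounded open set; $\ell$ is a fixed Lipschitz function vanishing at infinity; $\lambda>0$. $C_0^{0,1}(\mathbb R^d)$ denotes the Lipschitz functions on $\mathbb R^d$ vanishing at infinity. $\tau_B(\omega)=\inf\{t>0:\omega(t)\notin B\}$, $\zeta=\tau_{\bar O}$. For $g\in C_0^{0,1}(\mathbb R^d)$ let $v_g(x)=\mathbb E^x\big[\int_0^\zeta e^{-\lambda s}\ell(X_s)ds+e^{-\lambda\zeta}g(X_\zeta)\big]$ and $\Gamma_{out}[g]=\{x\in\partial O: v_g(x)=g(x)\}$. A point $x$ is regular for $B$ if $\mathbb P^x(\tau_{B^c}=0)=1$; $\partial_0O=\{x\in\partial O: x$ regular for $\bar O^c\}$. *)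

theory Defs
  imports "HOL-Probability.Probability"
begin

definition C0 :: "(real^'n \<Rightarrow> real) set" where
  "C0 = {f. continuous_on UNIV f \<and> (f \<longlongrightarrow> 0) at_infinity}"

definition C0_lip :: "(real^'n \<Rightarrow> real) set" where
  "C0_lip = {f. (\<exists>L. lipschitz_on L UNIV f) \<and> (f \<longlongrightarrow> 0) at_infinity}"

definition partial_deriv :: "'n::finite \<Rightarrow> (real^'n \<Rightarrow> real) \<Rightarrow> real^'n \<Rightarrow> real" where
  "partial_deriv i f x = frechet_derivative f (at x) (axis i 1)"

fun iter_partial :: "'n::finite list \<Rightarrow> (real^'n \<Rightarrow> real) \<Rightarrow> real^'n \<Rightarrow> real" where
  "iter_partial [] f = f"
| "iter_partial (i # is) f = partial_deriv i (iter_partial is f)"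

definition smooth :: "(real^'n::finite \<Rightarrow> real) \<Rightarrow> bool" where
  "smooth f \<longleftrightarrow> (\<forall>is x. iter_partial is f differentiable (at x))"

definition C0_smooth :: "(real^'n::finite \<Rightarrow> real) set" where
  "C0_smooth = {f. smooth f \<and> (\<forall>is. iter_partial is f \<in> C0)}"

definition feller_semigroup :: "(real \<Rightarrow> (real^'n \<Rightarrow> real) \<Rightarrow> real^'n \<Rightarrow> real) \<Rightarrow> bool" where
  "feller_semigroup Pt \<longleftrightarrow>
     (\<forall>t f. 0 \<le> t \<longrightarrow> f \<in> C0 \<longrightarrow> Pt t f \<in> C0)
   \<and> (\<forall>t f g a b. 0 \<le> t \<longrightarrow> f \<in> C0 \<longrightarrow> g \<in> C0 \<longrightarrow>
        Pt t (\<lambda>x. a * f x + b * g x) = (\<lambda>x. a * Pt t f x + b * Pt t g x))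
   \<and> (\<forall>t f x. 0 \<le> t \<longrightarrow> f \<in> C0 \<longrightarrow> (\<forall>y. 0 \<le> f y) \<longrightarrow> 0 \<le> Pt t f x)
   \<and> (\<forall>t f x. 0 \<le> t \<longrightarrow> f \<in> C0 \<longrightarrow> (\<forall>y. f y \<le> 1) \<longrightarrow> Pt t f x \<le> 1)
   \<and> (\<forall>f. f \<in> C0 \<longrightarrow> Pt 0 f = f)
   \<and> (\<forall>s t f. 0 \<le> s \<longrightarrow> 0 \<le> t \<longrightarrow> f \<in> C0 \<longrightarrow> Pt (s + t) f = Pt s (Pt t f))
   \<and> (\<forall>f. f \<in> C0 \<longrightarrow> uniform_limit UNIV (\<lambda>t. Pt t f) f (at_right 0))"

definition generator_domain :: "(real \<Rightarrow> (real^'n \<Rightarrow> real) \<Rightarrow> real^'n \<Rightarrow> real) \<Rightarrow> (real^'n \<Rightarrow> real) set" where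
  "generator_domain Pt = {f \<in> C0. \<exists>g \<in> C0.
      uniform_limit UNIV (\<lambda>t x. (Pt t f x - f x) / t) g (at_right 0)}"

text \<open>Paths are functions on the real line, extended constantly to negative times,
  so that they are in bijection with cadlag paths on [0,infinity).\<close>
definition cadlag :: "(real \<Rightarrow> real^'n) \<Rightarrow> bool" where
  "cadlag \<omega> \<longleftrightarrow> (\<forall>t\<ge>0. continuous (at_right t) \<omega>)
                \<and> (\<forall>t>0. \<exists>l. (\<omega> \<longlongrightarrow> l) (at_left t))
                \<and> (\<forall>t<0. \<omega> t = \<omega> 0)"

definition paths :: "(real \<Rightarrow> real^'n) set" where
  "paths = {\<omega>. cadlag \<omega>}"

definition path_space :: "(real \<Rightarrow> real^'n) measure" where
  "path_space = sigma paths
     {{\<omega> \<in> paths. \<omega> t \<in> A} | t A. 0 \<le> t \<and> A \<in> sets borel}"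

definition nat_filt :: "real \<Rightarrow> (real \<Rightarrow> real^'n) set set" where
  "nat_filt s = sigma_sets paths
     {{\<omega> \<in> paths. \<omega> r \<in> A} | r A. 0 \<le> r \<and> r \<le> s \<and> A \<in> sets borel}"

definition feller_process ::
  "(real \<Rightarrow> (real^'n \<Rightarrow> real) \<Rightarrow> real^'n \<Rightarrow> real) \<Rightarrow> (real^'n \<Rightarrow> (real \<Rightarrow> real^'n) measure) \<Rightarrow> bool" where
  "feller_process Pt P \<longleftrightarrow>
     feller_semigroup Pt
   \<and> (\<forall>x. prob_space (P x) \<and> sets (P x) = sets path_space)
   \<and> (\<forall>x. AE \<omega> in P x. \<omega> 0 = x)
   \<and> (\<forall>x s t f A. 0 \<le> s \<longrightarrow> 0 \<le> t \<longrightarrow> f \<in> C0 \<longrightarrow> A \<in> nat_filt s \<longrightarrow>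
        (\<integral>\<omega>. indicator A \<omega> * f (\<omega> (s + t)) \<partial>P x)
      = (\<integral>\<omega>. indicator A \<omega> * Pt t f (\<omega> s) \<partial>P x))"

definition exit_time :: "(real^'n) set \<Rightarrow> (real \<Rightarrow> real^'n) \<Rightarrow> ereal" where
  "exit_time B \<omega> = Inf {ereal t | t. 0 < t \<and> \<omega> t \<notin> B}"

definition payoff ::
  "(real^'n) set \<Rightarrow> (real^'n \<Rightarrow> real) \<Rightarrow> real \<Rightarrow> (real^'n \<Rightarrow> real) \<Rightarrow> (real \<Rightarrow> real^'n) \<Rightarrow> real" where
  "payoff Dom ell lam g \<omega> =
     (let \<zeta> = exit_time (closure Dom) \<omega> in
       interval_lebesgue_integral lborel 0 \<zeta> (\<lambda>s. exp (- lam * s) * ell (\<omega> s))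
       + (if \<zeta> = \<infinity> then 0
          else exp (- lam * real_of_ereal \<zeta>) * g (\<omega> (real_of_ereal \<zeta>))))"

definition value_fn ::
  "(real^'n \<Rightarrow> (real \<Rightarrow> real^'n) measure) \<Rightarrow> (real^'n) set \<Rightarrow> (real^'n \<Rightarrow> real) \<Rightarrow> real
     \<Rightarrow> (real^'n \<Rightarrow> real) \<Rightarrow> real^'n \<Rightarrow> real" where
  "value_fn P Dom ell lam g x = (\<integral>\<omega>. payoff Dom ell lam g \<omega> \<partial>completion (P x))"

definition Gamma_out ::
  "(real^'n \<Rightarrow> (real \<Rightarrow> real^'n) measure) \<Rightarrow> (real^'n) set \<Rightarrow> (real^'n \<Rightarrow> real) \<Rightarrow> real
     \<Rightarrow> (real^'n \<Rightarrow> real) \<Rightarrow> (real^'n) set" where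
  "Gamma_out P Dom ell lam g = {x \<in> frontier Dom. value_fn P Dom ell lam g x = g x}"

definition regular_for ::
  "(real^'n \<Rightarrow> (real \<Rightarrow> real^'n) measure) \<Rightarrow> (real^'n) set \<Rightarrow> real^'n \<Rightarrow> bool" where
  "regular_for P B x \<longleftrightarrow>
     emeasure (completion (P x)) {\<omega> \<in> space (P x). exit_time (- B) \<omega> = 0} = 1"

definition regular_boundary ::
  "(real^'n \<Rightarrow> (real \<Rightarrow> real^'n) measure) \<Rightarrow> (real^'n) set \<Rightarrow> (real^'n) set" where
  "regular_boundary P Dom = {x \<in> frontier Dom. regular_for P (- closure Dom) x}"

end

theory Submission
  imports Defs
begin

text \<open>
  Because \<open>-(-closure Dom) = closure Dom\<close>, a boundary point \<open>x\<close> is regular exactly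
  when \<open>\<zeta> = 0\<close> almost surely under \<open>P x\<close>. Then the payoff is \<open>g (X 0) = g x\<close> almost
  surely, so \<open>v\<^sub>g x = g x\<close> for every \<open>g\<close>. Conversely, take the tent \<open>h\<close> of height 1 at
  \<open>x\<close>. If \<open>v\<^sub>g x = g x\<close> for \<open>g = h\<close> and \<open>g = 2 h\<close>, the two payoffs differ by the
  discounted exit reward \<open>J = exp (-\<lambda> \<zeta>) h (X \<zeta>)\<close>, so \<open>E J = 1\<close>; since \<open>J \<le> 1\<close>,
  this forces \<open>J = 1\<close> almost surely, which happens only when \<open>\<zeta> = 0\<close>.
\<close>

lemma borel_measurable_completion_AE_const:
  fixes f :: "'a \<Rightarrow> real"
  assumes "AE w in completion M. f w = c"
  shows "f \<in> borel_measurable (completion M)"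
proof (rule measurableI)
  fix A :: "real set"
  have "AE w in completion M. w \<in> (if c \<in> A then space (completion M) else {})
          \<longleftrightarrow> w \<in> f -` A \<inter> space (completion M)"
    using assms by eventually_elim auto
  then show "f -` A \<inter> space (completion M) \<in> sets (completion M)"
    by (rule completion.in_sets_AE) auto
qed auto

lemma (in prob_space) AE_eq_1_if_le_1_and_integral_1:
  fixes X :: "'a \<Rightarrow> real"
  assumes "integrable M X" "expectation X = 1" "\<And>w. X w \<le> 1"
  shows "AE w in M. X w = 1"
proof -
  have int: "integrable M (\<lambda>w. 1 - X w)"
    using assms(1) by auto
  have "expectation (\<lambda>w. 1 - X w) = 0"
    using assms(1,2) by (simp add: prob_space)
  then have "AE w in M. 1 - X w = 0"
    using integral_nonneg_eq_0_iff_AE[OF int] assms(3) by simp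
  then show ?thesis
    by eventually_elim simp
qed

text \<open>A non-integrable function has Bochner integral 0, so nonzero integrals certify integrability.\<close>
lemma integral_diff_of_nonzero_integrals:
  fixes X Y :: "'a \<Rightarrow> real"
  assumes "integral\<^sup>L M (\<lambda>w. X w + Y w) = a" "a \<noteq> 0"
    and "integral\<^sup>L M (\<lambda>w. X w + 2 * Y w) = b" "b \<noteq> 0"
  shows "integrable M Y" "integral\<^sup>L M Y = b - a"
proof -
  have int1: "integrable M (\<lambda>w. X w + Y w)" and int2: "integrable M (\<lambda>w. X w + 2 * Y w)"
    using assms not_integrable_integral_eq by fastforce+
  have Y: "Y = (\<lambda>w. (X w + 2 * Y w) - (X w + Y w))"
    by auto
  show "integrable M Y"
    by (subst Y) (rule Bochner_Integration.integrable_diff[OF int2 int1])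
  show "integral\<^sup>L M Y = b - a"
    by (subst Y) (simp only: Bochner_Integration.integral_diff[OF int2 int1] assms(1,3))
qed

lemma exit_time_nonneg: "0 \<le> exit_time B w"
  unfolding exit_time_def by (rule Inf_greatest) auto

definition running_cost ::
  "(real^'n) set \<Rightarrow> (real^'n \<Rightarrow> real) \<Rightarrow> real \<Rightarrow> (real \<Rightarrow> real^'n) \<Rightarrow> real" where
  "running_cost Dom ell lam \<omega> =
     interval_lebesgue_integral lborel 0 (exit_time (closure Dom) \<omega>)
       (\<lambda>s. exp (- lam * s) * ell (\<omega> s))"

definition discounted_exit_reward ::
  "real \<Rightarrow> ('a \<Rightarrow> real) \<Rightarrow> ereal \<Rightarrow> (real \<Rightarrow> 'a) \<Rightarrow> real" where
  "discounted_exit_reward lam g \<zeta> \<omega> =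
     (if \<zeta> = \<infinity> then 0 else exp (- lam * real_of_ereal \<zeta>) * g (\<omega> (real_of_ereal \<zeta>)))"

lemma payoff_eq_running_cost_plus_exit_reward:
  "payoff Dom ell lam g \<omega> =
     running_cost Dom ell lam \<omega> + discounted_exit_reward lam g (exit_time (closure Dom) \<omega>) \<omega>"
  unfolding payoff_def running_cost_def discounted_exit_reward_def by (simp add: Let_def)

lemma discounted_exit_reward_scale:
  "discounted_exit_reward lam (\<lambda>y. c * g y) \<zeta> \<omega> = c * discounted_exit_reward lam g \<zeta> \<omega>"
  unfolding discounted_exit_reward_def by simp

lemma payoff_exit_time_0:
  assumes "exit_time (closure Dom) \<omega> = 0"
  shows "payoff Dom ell lam g \<omega> = g (\<omega> 0)"
proof -
  have "einterval 0 0 = {}"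
    by (auto simp: einterval_def)
  then have "running_cost Dom ell lam \<omega> = 0"
    using assms by (simp add: running_cost_def interval_lebesgue_integral_def
        set_lebesgue_integral_def zero_ereal_def)
  then show ?thesis
    using assms by (simp add: payoff_eq_running_cost_plus_exit_reward
        discounted_exit_reward_def zero_ereal_def)
qed

lemma discounted_exit_reward_le_1:
  assumes "0 \<le> \<zeta>" "0 < lam" "\<And>y. 0 \<le> g y" "\<And>y. g y \<le> 1"
  shows "discounted_exit_reward lam g \<zeta> \<omega> \<le> 1"
proof (cases "\<zeta> = \<infinity>")
  case False
  have "exp (- lam * real_of_ereal \<zeta>) \<le> 1"
    using assms(1,2) by (simp add: real_of_ereal_pos)
  then have "exp (- lam * real_of_ereal \<zeta>) * g (\<omega> (real_of_ereal \<zeta>)) \<le> 1 * 1"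
    using assms(3,4) by (intro mult_mono) auto
  then show ?thesis
    using False by (simp add: discounted_exit_reward_def)
qed (simp add: discounted_exit_reward_def)

lemma exit_time_0_if_discounted_exit_reward_1:
  assumes "0 \<le> \<zeta>" "0 < lam" "\<And>y. g y \<le> 1"
    and reward: "discounted_exit_reward lam g \<zeta> \<omega> = 1"
  shows "\<zeta> = 0"
proof -
  have "\<zeta> \<noteq> \<infinity>"
    using reward by (auto simp: discounted_exit_reward_def)
  with assms(1) obtain r where \<zeta>: "\<zeta> = ereal r" and "0 \<le> r"
    by (cases \<zeta>) auto
  have "1 = exp (- lam * r) * g (\<omega> r)"
    using reward \<zeta> by (simp add: discounted_exit_reward_def)
  also have "\<dots> \<le> exp (- lam * r)"
    using assms(3)[of "\<omega> r"] by (simp add: mult_left_le)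
  finally have "lam * r \<le> 0"
    by simp
  with \<open>0 \<le> r\<close> assms(2) have "r = 0"
    by (simp add: mult_le_0_iff)
  then show ?thesis
    using \<zeta> by (simp add: zero_ereal_def)
qed

lemma regular_for_complement_closure_iff_AE:
  assumes "prob_space (P x)"
  shows "regular_for P (- closure Dom) x \<longleftrightarrow>
           (AE \<omega> in completion (P x). exit_time (closure Dom) \<omega> = 0)"
    (is "_ \<longleftrightarrow> (AE \<omega> in ?M. ?Z \<omega>)")
proof -
  interpret M: prob_space ?M
    using assms by (rule prob_space.prob_space_completion)
  let ?S = "{\<omega> \<in> space (P x). ?Z \<omega>}"
  have "regular_for P (- closure Dom) x \<longleftrightarrow> emeasure ?M ?S = 1"
    by (simp add: regular_for_def)
  also have "\<dots> \<longleftrightarrow> (AE \<omega> in ?M. ?Z \<omega>)"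
  proof
    assume S: "emeasure ?M ?S = 1"
    then have "?S \<in> M.events"
      using emeasure_notin_sets by fastforce
    moreover have "M.prob ?S = 1"
      using S by (simp add: M.emeasure_eq_measure)
    ultimately have "AE \<omega> in ?M. \<omega> \<in> ?S"
      by (simp only: M.AE_in_set_eq_1)
    then show "AE \<omega> in ?M. ?Z \<omega>"
      by eventually_elim simp
  next
    assume AE: "AE \<omega> in ?M. ?Z \<omega>"
    then have "AE \<omega> in ?M. \<omega> \<in> space ?M \<longleftrightarrow> \<omega> \<in> ?S"
      by eventually_elim auto
    then have "?S \<in> M.events"
      by (rule completion.in_sets_AE) auto
    moreover have "AE \<omega> in ?M. \<omega> \<in> ?S"
      using AE AE_space by eventually_elim auto
    ultimately have "M.prob ?S = 1"
      using M.AE_in_set_eq_1 by blast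
    then show "emeasure ?M ?S = 1"
      by (simp only: M.emeasure_eq_measure ennreal_1)
  qed
  finally show ?thesis .
qed

lemma value_fn_eq_if_immediate_exit:
  assumes "prob_space (P x)" "AE \<omega> in P x. \<omega> 0 = x"
    and "AE \<omega> in completion (P x). exit_time (closure Dom) \<omega> = 0"
  shows "value_fn P Dom ell lam g x = g x"
proof -
  have AE: "AE \<omega> in completion (P x). payoff Dom ell lam g \<omega> = g x"
    using AE_completion[OF assms(2)] assms(3) by eventually_elim (simp add: payoff_exit_time_0)
  have "value_fn P Dom ell lam g x = (\<integral>\<omega>. g x \<partial>completion (P x))"
    unfolding value_fn_def
    using AE borel_measurable_completion_AE_const[OF AE] by (intro integral_cong_AE) auto
  then show ?thesis
    using prob_space.prob_space[OF assms(1)] by simp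
qed

definition tent :: "'a::metric_space \<Rightarrow> real \<Rightarrow> 'a \<Rightarrow> real" where
  "tent x a y = a * max 0 (1 - dist y x)"

lemma tent_center [simp]: "tent x a x = a"
  by (simp add: tent_def)

lemma lipschitz_on_tent:
  assumes "0 \<le> a"
  shows "lipschitz_on a S (tent x a)"
proof (rule lipschitz_onI)
  fix y z
  have "\<bar>max 0 (1 - dist y x) - max 0 (1 - dist z x)\<bar> \<le> \<bar>dist y x - dist z x\<bar>"
    by (simp add: max_def abs_le_iff abs_if)
  also have "\<dots> \<le> dist y z"
    using abs_dist_diff_le[of y x z] by (simp add: dist_commute)
  finally have "a * \<bar>max 0 (1 - dist y x) - max 0 (1 - dist z x)\<bar> \<le> a * dist y z"
    using assms by (rule mult_left_mono)
  then show "dist (tent x a y) (tent x a z) \<le> a * dist y z"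
    using assms by (simp add: tent_def dist_real_def abs_mult right_diff_distrib[symmetric])
qed (rule assms)

lemma eventually_tent_eq_0_at_infinity:
  fixes x :: "'a::real_normed_vector"
  shows "\<forall>\<^sub>F y in at_infinity. tent x a y = 0"
  unfolding eventually_at_infinity
proof (intro exI allI impI)
  fix y :: 'a
  assume "norm x + 1 \<le> norm y"
  then have "1 \<le> dist y x"
    using norm_triangle_ineq2[of y x] by (simp add: dist_norm)
  then show "tent x a y = 0"
    by (simp add: tent_def)
qed

lemma tent_in_C0_lip:
  fixes x :: "real^'n"
  assumes "0 \<le> a"
  shows "tent x a \<in> C0_lip"
  using lipschitz_on_tent[OF assms] eventually_tent_eq_0_at_infinity[of x a]
  unfolding C0_lip_def by (auto intro: tendsto_eventually)

lemma immediate_exit_if_value_fn_eq_on_tents: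
  assumes "prob_space (P x)" "0 < lam"
    and v1: "value_fn P Dom ell lam (tent x 1) x = 1"
    and v2: "value_fn P Dom ell lam (tent x 2) x = 2"
  shows "AE \<omega> in completion (P x). exit_time (closure Dom) \<omega> = 0"
proof -
  interpret M: prob_space "completion (P x)"
    using assms(1) by (rule prob_space.prob_space_completion)
  let ?\<zeta> = "exit_time (closure Dom)"
  define J where "J \<omega> = discounted_exit_reward lam (tent x 1) (?\<zeta> \<omega>) \<omega>" for \<omega>
  have tent2: "tent x 2 = (\<lambda>y. 2 * tent x 1 y)"
    by (simp add: tent_def fun_eq_iff)
  have "payoff Dom ell lam (tent x 1) = (\<lambda>\<omega>. running_cost Dom ell lam \<omega> + J \<omega>)"
    by (simp add: fun_eq_iff payoff_eq_running_cost_plus_exit_reward J_def)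
  moreover have "payoff Dom ell lam (tent x 2) = (\<lambda>\<omega>. running_cost Dom ell lam \<omega> + 2 * J \<omega>)"
    unfolding tent2 by (simp add: fun_eq_iff payoff_eq_running_cost_plus_exit_reward J_def
        discounted_exit_reward_scale)
  ultimately have "M.expectation (\<lambda>\<omega>. running_cost Dom ell lam \<omega> + J \<omega>) = 1"
    "M.expectation (\<lambda>\<omega>. running_cost Dom ell lam \<omega> + 2 * J \<omega>) = 2"
    using v1 v2 by (simp_all add: value_fn_def)
  then have "integrable (completion (P x)) J" "M.expectation J = 1"
    using integral_diff_of_nonzero_integrals[of _ _ J] by auto
  moreover have "J \<omega> \<le> 1" for \<omega>
    unfolding J_def
    by (rule discounted_exit_reward_le_1[OF exit_time_nonneg assms(2)]) (simp_all add: tent_def)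
  ultimately have "AE \<omega> in completion (P x). J \<omega> = 1"
    by (rule M.AE_eq_1_if_le_1_and_integral_1)
  then show ?thesis
  proof eventually_elim
    case (elim \<omega>)
    show ?case
      by (rule exit_time_0_if_discounted_exit_reward_1[OF exit_time_nonneg assms(2) _
            elim[unfolded J_def]]) (simp add: tent_def)
  qed
qed

theorem lemmaA1:
  fixes Pt :: "real \<Rightarrow> (real^'n \<Rightarrow> real) \<Rightarrow> real^'n \<Rightarrow> real"
    and P :: "real^'n \<Rightarrow> (real \<Rightarrow> real^'n) measure"
    and Dom :: "(real^'n) set"
    and ell :: "real^'n \<Rightarrow> real"
    and lam :: real
  assumes proc: "feller_process Pt P"
    and gen: "C0_smooth \<subseteq> generator_domain Pt"
    and O_open: "open Dom" and O_bdd: "bounded Dom" and O_conn: "connected Dom"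
    and ell: "ell \<in> C0_lip"
    and lam: "lam > 0"
    and finite_exit: "\<forall>x. emeasure (completion (P x))
                        {\<omega> \<in> space (P x). exit_time (closure Dom) \<omega> < \<infinity>} = 1"
  shows "(\<Inter>g \<in> C0_lip. Gamma_out P Dom ell lam g) = regular_boundary P Dom"
proof -
  have prob: "prob_space (P x)" and start: "AE \<omega> in P x. \<omega> 0 = x" for x
    using proc by (auto simp: feller_process_def)
  have "x \<in> regular_boundary P Dom \<longleftrightarrow> (\<forall>g \<in> C0_lip. x \<in> Gamma_out P Dom ell lam g)" for x
  proof
    assume "x \<in> regular_boundary P Dom"
    then have "x \<in> frontier Dom"
      and "AE \<omega> in completion (P x). exit_time (closure Dom) \<omega> = 0"
      using regular_for_complement_closure_iff_AE[OF prob] by (auto simp: regular_boundary_def)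
    then show "\<forall>g \<in> C0_lip. x \<in> Gamma_out P Dom ell lam g"
      using value_fn_eq_if_immediate_exit[of P x, OF prob start] by (auto simp: Gamma_out_def)
  next
    assume "\<forall>g \<in> C0_lip. x \<in> Gamma_out P Dom ell lam g"
    then have "x \<in> Gamma_out P Dom ell lam (tent x 1)" "x \<in> Gamma_out P Dom ell lam (tent x 2)"
      using tent_in_C0_lip[where a = 1] tent_in_C0_lip[where a = 2] by auto
    then show "x \<in> regular_boundary P Dom"
      using immediate_exit_if_value_fn_eq_on_tents[of P x, OF prob lam]
        regular_for_complement_closure_iff_AE[OF prob]
      by (auto simp: Gamma_out_def regular_boundary_def)
  qed
  then show ?thesis
    by blast
qed

end
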